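(* Let $a,b$ be positive integers with $a\ge b$ such that either $b\ge 2$, or $b=1$ and $a\ge 5$, and let $A=\begin{pmatrix}2&-a\\-b&2\end{pmatrix}$. Then every $\pi$-system $\Sigma\subseteq\Delta^+_{\mathrm{re}}$ of $\mathfrak g(A)$ satisfies $|\Sigma|\le 2$. If $|\Sigma|=2$, then $\Sigma=\{\beta_1^j,\beta_2^k\}$ for some $j,k\in\mathbb Z_+$; in particular $\Sigma$ is linearly independent. Conversely: (1) if $b\ge 2$, then $\{\beta_1^j,\beta_2^k\}$ is a $\pi$-system for all $j,k\in\mathbb Z_+$; (2) if $b=1$ and $a\ge 5$, then $\{\beta_1^j,\beta_2^k\}$ is a $\pi$-system if and only if $(j,k)\neq(1,0)$.
   Context: Let $\mathfrak g(A)$ be the Kac–Moody algebra of the generalized Cartan matrix $A=\begin{pmatrix}2&-a\\-b&2\end{pmatrix}$, with simple roots $\alpha_1,\alpha_2$, root system $\Delta$, set of real roots $\Delta_{\mathrm{re}}$ and positive real roots $\Delta^+_{\mathrm{re}}$. $\mathbb Z_+=\{0,1,2,\dots\}$. Define integers $c_j,d_j$ ($j\in\mathbb Z_+$) by $c_0=d_0=0$, $c_1=d_1=1$, $c_{k+2}+c_k=a\,d_{k+1}$, $d_{k+2}+d_k=b\,c_{k+1}$. For $j\in\mathbb Z_+$ set $\beta_1^j=c_j\alpha_1+d_{j+1}\alpha_2$ and $\beta_2^j=c_{j+1}\alpha_1+d_j\alpha_2$; then $\Delta^+_{\mathrm{re}}=\{\beta_1^j,\beta_2^j: j\in\mathbb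 Z_+\}$. A subset $\Sigma\subseteq\Delta_{\mathrm{re}}$ is called a $\pi$-system if $\alpha-\beta\notin\Delta$ for all $\alpha,\beta\in\Sigma$ (here $0\notin\Delta$). *)

theory Defs
  imports Complex_Main
begin

text \<open>Rank-2 Kac-Moody root data for A = [[2,-a],[-b,2]].
  An element m alpha_1 + n alpha_2 of the root lattice is the pair (m,n) :: int * int.\<close>

type_synonym rlat = "int \<times> int"

definition rdiff :: "rlat \<Rightarrow> rlat \<Rightarrow> rlat" where
  "rdiff x y = (fst x - fst y, snd x - snd y)"

definition rneg :: "rlat \<Rightarrow> rlat" where
  "rneg x = (- fst x, - snd x)"

text \<open>Pairings with simple coroots: alpha_j(h_i) = a_ij.\<close>
definition pair1 :: "int \<Rightarrow> int \<Rightarrow> rlat \<Rightarrow> int" where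
  "pair1 a b x = 2 * fst x - a * snd x"
definition pair2 :: "int \<Rightarrow> int \<Rightarrow> rlat \<Rightarrow> int" where
  "pair2 a b x = - b * fst x + 2 * snd x"

definition refl1 :: "int \<Rightarrow> int \<Rightarrow> rlat \<Rightarrow> rlat" where
  "refl1 a b x = (fst x - pair1 a b x, snd x)"
definition refl2 :: "int \<Rightarrow> int \<Rightarrow> rlat \<Rightarrow> rlat" where
  "refl2 a b x = (fst x, snd x - pair2 a b x)"

text \<open>Weyl group orbit W . S (W generated by the simple reflections, which are involutions).\<close>
inductive_set worbit :: "int \<Rightarrow> int \<Rightarrow> rlat set \<Rightarrow> rlat set" for a b S where
  base: "x \<in> S \<Longrightarrow> x \<in> worbit a b S"
| r1: "x \<in> worbit a b S \<Longrightarrow> refl1 a b x \<in> worbit a b S"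
| r2: "x \<in> worbit a b S \<Longrightarrow> refl2 a b x \<in> worbit a b S"

text \<open>Real roots: W . Pi (Kac, Prop. 5.1).\<close>
definition real_roots :: "int \<Rightarrow> int \<Rightarrow> rlat set" where
  "real_roots a b = worbit a b {(1,0), (0,1)}"

definition pos_real_roots :: "int \<Rightarrow> int \<Rightarrow> rlat set" where
  "pos_real_roots a b = {x \<in> real_roots a b. fst x \<ge> 0 \<and> snd x \<ge> 0}"

text \<open>Fundamental set K (Kac, Thm 5.4): nonzero alpha in Q_+ with connected support
  and alpha(h_i) \<le> 0 for i = 1,2.  The support of a nonzero element is connected iff it is
  a single node or the two nodes are joined (a \<noteq> 0).\<close>
definition Kset :: "int \<Rightarrow> int \<Rightarrow> rlat set" where
  "Kset a b = {x. fst x \<ge> 0 \<and> snd x \<ge> 0 \<and> x \<noteq> (0,0) \<and>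
                  (fst x = 0 \<or> snd x = 0 \<or> a \<noteq> 0) \<and>
                  pair1 a b x \<le> 0 \<and> pair2 a b x \<le> 0}"

definition pos_imag_roots :: "int \<Rightarrow> int \<Rightarrow> rlat set" where
  "pos_imag_roots a b = worbit a b (Kset a b)"

definition imag_roots :: "int \<Rightarrow> int \<Rightarrow> rlat set" where
  "imag_roots a b = pos_imag_roots a b \<union> rneg ` pos_imag_roots a b"

definition roots :: "int \<Rightarrow> int \<Rightarrow> rlat set" where
  "roots a b = real_roots a b \<union> imag_roots a b"

definition pi_system :: "int \<Rightarrow> int \<Rightarrow> rlat set \<Rightarrow> bool" where
  "pi_system a b S \<longleftrightarrow> S \<subseteq> real_roots a b \<and>
     (\<forall>x\<in>S. \<forall>y\<in>S. rdiff x y \<notin> roots a b)"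

fun cd :: "int \<Rightarrow> int \<Rightarrow> nat \<Rightarrow> int \<times> int" where
  "cd a b 0 = (0, 0)"
| "cd a b (Suc 0) = (1, 1)"
| "cd a b (Suc (Suc k)) =
     (a * snd (cd a b (Suc k)) - fst (cd a b k), b * fst (cd a b (Suc k)) - snd (cd a b k))"

definition cseq :: "int \<Rightarrow> int \<Rightarrow> nat \<Rightarrow> int" where "cseq a b k = fst (cd a b k)"
definition dseq :: "int \<Rightarrow> int \<Rightarrow> nat \<Rightarrow> int" where "dseq a b k = snd (cd a b k)"

definition beta1 :: "int \<Rightarrow> int \<Rightarrow> nat \<Rightarrow> rlat" where
  "beta1 a b j = (cseq a b j, dseq a b (j + 1))"
definition beta2 :: "int \<Rightarrow> int \<Rightarrow> nat \<Rightarrow> rlat" where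
  "beta2 a b j = (cseq a b (j + 1), dseq a b j)"

definition lin_indep :: "rlat set \<Rightarrow> bool" where
  "lin_indep S \<longleftrightarrow> finite S \<and> (\<forall>u :: rlat \<Rightarrow> real.
      (\<Sum>v\<in>S. u v * real_of_int (fst v)) = 0 \<and> (\<Sum>v\<in>S. u v * real_of_int (snd v)) = 0
      \<longrightarrow> (\<forall>v\<in>S. u v = 0))"

end

theory Submission
  imports Defs
begin

text \<open>The invariant form, normalised as qform (m, n) = b m^2 - a b m n + a n^2, equals a or b
  on real roots and is at most 0 on imaginary roots; conversely every nonzero lattice vector with
  qform at most 0 is an imaginary root. For a b >= 4 the positive real roots are exactly the
  beta's, and the simple reflections permute them: r1 swaps beta1 j with beta2 (j+1), r2 swaps
  beta2 k with beta1 (k+1). Hence a difference within one chain is Weyl-conjugate to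
  beta1 (p+1) - alpha2 or beta2 (p+1) - alpha1, which has qform at most 0 (or is a real root when
  b = 1, p = 0), so a pi-system contains at most one root of each chain. A difference
  beta1 j - beta2 k is conjugate, up to sign, to beta1 (j+k) - alpha1 or alpha2 - beta2 (j+k),
  whose qform exceeds a, so it is not a root; the only exception is beta1 1 - beta2 0 = alpha2
  when b = 1.\<close>

text \<open>qform x is half the invariant form (x|x) normalised by (alpha1|alpha1) = 2 b and
  (alpha2|alpha2) = 2 a.\<close>
definition qform :: "int \<Rightarrow> int \<Rightarrow> rlat \<Rightarrow> int" where
  "qform a b x = b * (fst x)^2 - a * b * fst x * snd x + a * (snd x)^2"

definition det2 :: "rlat \<Rightarrow> rlat \<Rightarrow> int" where
  "det2 x y = fst x * snd y - snd x * fst y"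

lemma refl1_refl1 [simp]: "refl1 a b (refl1 a b x) = x"
  by (simp add: refl1_def pair1_def)

lemma refl2_refl2 [simp]: "refl2 a b (refl2 a b x) = x"
  by (simp add: refl2_def pair2_def)

lemma rneg_rneg [simp]: "rneg (rneg x) = x"
  by (simp add: rneg_def)

lemma refl1_rneg: "refl1 a b (rneg x) = rneg (refl1 a b x)"
  by (simp add: refl1_def rneg_def pair1_def)

lemma refl2_rneg: "refl2 a b (rneg x) = rneg (refl2 a b x)"
  by (simp add: refl2_def rneg_def pair2_def)

lemma refl1_rdiff: "refl1 a b (rdiff x y) = rdiff (refl1 a b x) (refl1 a b y)"
  by (simp add: refl1_def rdiff_def pair1_def algebra_simps)

lemma refl2_rdiff: "refl2 a b (rdiff x y) = rdiff (refl2 a b x) (refl2 a b y)"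
  by (simp add: refl2_def rdiff_def pair2_def algebra_simps)

lemma rneg_rdiff: "rneg (rdiff x y) = rdiff y x"
  by (simp add: rneg_def rdiff_def)

lemma refl1_eq_0_iff: "refl1 a b x = (0, 0) \<longleftrightarrow> x = (0, 0)"
  by (cases x) (auto simp: refl1_def pair1_def)

lemma refl2_eq_0_iff: "refl2 a b x = (0, 0) \<longleftrightarrow> x = (0, 0)"
  by (cases x) (auto simp: refl2_def pair2_def)

lemma qform_refl1 [simp]: "qform a b (refl1 a b x) = qform a b x"
  by (simp add: qform_def refl1_def pair1_def power2_eq_square algebra_simps)

lemma qform_refl2 [simp]: "qform a b (refl2 a b x) = qform a b x"
  by (simp add: qform_def refl2_def pair2_def power2_eq_square algebra_simps)

lemma qform_rneg [simp]: "qform a b (rneg x) = qform a b x"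
  by (simp add: qform_def rneg_def)

lemma qform_rdiff_commute: "qform a b (rdiff x y) = qform a b (rdiff y x)"
  by (metis qform_rneg rneg_rdiff)

lemma qform_rdiff_alpha1: "qform a b (rdiff x (1, 0)) = qform a b x + b - b * pair1 a b x"
  by (simp add: qform_def rdiff_def pair1_def power2_eq_square algebra_simps)

lemma qform_rdiff_alpha2: "qform a b (rdiff x (0, 1)) = qform a b x + a - a * pair2 a b x"
  by (simp add: qform_def rdiff_def pair2_def power2_eq_square algebra_simps)

lemma det2_refl1: "det2 (refl1 a b x) (refl1 a b y) = det2 y x"
  by (simp add: det2_def refl1_def pair1_def algebra_simps)

lemma det2_refl2: "det2 (refl2 a b x) (refl2 a b y) = det2 y x"
  by (simp add: det2_def refl2_def pair2_def algebra_simps)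

lemma lin_indep_pair:
  assumes "det2 x y \<noteq> 0"
  shows "lin_indep {x, y}"
  unfolding lin_indep_def
proof (intro conjI allI impI)
  show "finite {x, y}" by simp
  fix u :: "rlat \<Rightarrow> real"
  assume sums: "(\<Sum>v\<in>{x, y}. u v * of_int (fst v)) = 0 \<and> (\<Sum>v\<in>{x, y}. u v * of_int (snd v)) = 0"
  have "x \<noteq> y" using assms by (auto simp: det2_def)
  then have eq1: "u x * fst x + u y * fst y = 0" and eq2: "u x * snd x + u y * snd y = 0"
    using sums by simp_all
  have det: "real_of_int (det2 x y) \<noteq> 0" using assms by simp
  have "u x * det2 x y = (u x * fst x + u y * fst y) * snd y - (u x * snd x + u y * snd y) * fst y"
    by (simp add: det2_def algebra_simps)
  then have "u x = 0" using eq1 eq2 det by simp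
  moreover have "u y * det2 x y = (u x * snd x + u y * snd y) * fst x - (u x * fst x + u y * fst y) * snd x"
    by (simp add: det2_def algebra_simps)
  then have "u y = 0" using eq1 eq2 det by simp
  ultimately show "\<forall>v\<in>{x, y}. u v = 0" by simp
qed

lemma real_roots_rneg: "x \<in> real_roots a b \<Longrightarrow> rneg x \<in> real_roots a b"
  unfolding real_roots_def
proof (induction rule: worbit.induct)
  case (base x)
  then have "rneg x = refl1 a b x \<or> rneg x = refl2 a b x"
    by (auto simp: rneg_def refl1_def refl2_def pair1_def pair2_def)
  then show ?case using base by (metis worbit.base worbit.r1 worbit.r2)
qed (metis refl1_rneg worbit.r1, metis refl2_rneg worbit.r2)

lemma roots_rneg_iff: "rneg x \<in> roots a b \<longleftrightarrow> x \<in> roots a b"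
proof -
  have "rneg x \<in> roots a b" if "x \<in> roots a b" for x
    using that real_roots_rneg[of x a b] unfolding roots_def imag_roots_def by auto
  then show ?thesis by (metis rneg_rneg)
qed

lemma roots_refl1_iff: "refl1 a b x \<in> roots a b \<longleftrightarrow> x \<in> roots a b"
proof -
  have "refl1 a b x \<in> roots a b" if "x \<in> roots a b" for x
    using that unfolding roots_def imag_roots_def real_roots_def pos_imag_roots_def
    by (auto intro: worbit.r1 simp: refl1_rneg)
  then show ?thesis by (metis refl1_refl1)
qed

lemma roots_refl2_iff: "refl2 a b x \<in> roots a b \<longleftrightarrow> x \<in> roots a b"
proof -
  have "refl2 a b x \<in> roots a b" if "x \<in> roots a b" for x
    using that unfolding roots_def imag_roots_def real_roots_def pos_imag_roots_def
    by (auto intro: worbit.r2 simp: refl2_rneg)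
  then show ?thesis by (metis refl2_refl2)
qed

lemma worbit_qform: "x \<in> worbit a b S \<Longrightarrow> \<exists>y\<in>S. qform a b x = qform a b y"
  by (induction rule: worbit.induct) auto

lemma worbit_nonzero: "x \<in> worbit a b S \<Longrightarrow> (0, 0) \<notin> S \<Longrightarrow> x \<noteq> (0, 0)"
  by (induction rule: worbit.induct) (auto simp: refl1_eq_0_iff refl2_eq_0_iff)

lemma zero_notin_roots: "(0, 0) \<notin> roots a b"
proof -
  have "(0, 0) \<notin> real_roots a b" "(0, 0) \<notin> pos_imag_roots a b"
    unfolding real_roots_def pos_imag_roots_def
    by (auto dest: worbit_nonzero simp: Kset_def)
  moreover have "rneg (0, 0) = (0, 0)" by (simp add: rneg_def)
  ultimately show ?thesis unfolding roots_def imag_roots_def by (metis UnE imageE rneg_rneg)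
qed

lemma Kset_qform_nonpos:
  assumes "0 \<le> a" "0 \<le> b" "x \<in> Kset a b"
  shows "qform a b x \<le> 0"
proof -
  have "0 \<le> fst x" "0 \<le> snd x" "pair1 a b x \<le> 0" "pair2 a b x \<le> 0"
    using assms(3) by (auto simp: Kset_def)
  then have "b * fst x * pair1 a b x \<le> 0" "a * snd x * pair2 a b x \<le> 0"
    using assms(1,2) by (simp_all add: mult_nonneg_nonpos)
  moreover have "2 * qform a b x = b * fst x * pair1 a b x + a * snd x * pair2 a b x"
    by (simp add: qform_def pair1_def pair2_def power2_eq_square algebra_simps)
  ultimately show ?thesis by linarith
qed

lemma roots_qform:
  assumes "0 \<le> a" "0 \<le> b" "x \<in> roots a b"
  shows "qform a b x \<le> 0 \<or> qform a b x = a \<or> qform a b x = b"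
proof -
  have imag: "qform a b y \<le> 0" if "y \<in> pos_imag_roots a b" for y
    using that worbit_qform Kset_qform_nonpos[OF assms(1,2)] unfolding pos_imag_roots_def by metis
  have real: "qform a b y = a \<or> qform a b y = b" if "y \<in> real_roots a b" for y
  proof -
    have "qform a b (1, 0) = b" "qform a b (0, 1) = a" by (simp_all add: qform_def)
    then show ?thesis using worbit_qform[of y a b "{(1, 0), (0, 1)}"] that
      unfolding real_roots_def by auto
  qed
  from assms(3) consider "x \<in> real_roots a b" | "x \<in> pos_imag_roots a b"
    | y where "x = rneg y" "y \<in> pos_imag_roots a b"
    unfolding roots_def imag_roots_def by blast
  then show ?thesis by cases (use imag real in auto)
qed

lemma qform_gt_notin_roots:
  assumes "0 \<le> b" "b \<le> a" "a < qform a b x"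
  shows "x \<notin> roots a b"
  using roots_qform[of a b x] assms by auto

lemma qform_nonpos_same_sign:
  assumes "1 \<le> a" "1 \<le> b" "qform a b (m, n) \<le> 0" "(m, n) \<noteq> (0, 0)"
  shows "(0 < m \<and> 0 < n) \<or> (m < 0 \<and> n < 0)"
proof (rule ccontr)
  assume "\<not> ?thesis"
  then have "m * n \<le> 0" by (auto simp: mult_le_0_iff)
  then have "a * b * (m * n) \<le> 0" using assms(1,2) by (simp add: mult_nonneg_nonpos)
  moreover have "0 < b * m^2 \<or> 0 < a * n^2" using assms(1,2,4) by auto
  moreover have "0 \<le> b * m^2" "0 \<le> a * n^2" using assms(1,2) by auto
  ultimately have "0 < qform a b (m, n)" unfolding qform_def by (simp add: algebra_simps) linarith
  then show False using assms(3) by simp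
qed

text \<open>Kac's descent: reflecting in a simple root with positive pairing lowers the height, and
  the sign lemma keeps both coordinates positive, so the process ends in the fundamental set.\<close>
lemma qform_nonpos_pos_imag_root:
  assumes "1 \<le> a" "1 \<le> b"
  shows "0 < m \<Longrightarrow> 0 < n \<Longrightarrow> qform a b (m, n) \<le> 0 \<Longrightarrow> (m, n) \<in> pos_imag_roots a b"
proof (induction "nat (m + n)" arbitrary: m n rule: less_induct)
  case less
  note sign = qform_nonpos_same_sign[OF assms]
  consider "0 < pair1 a b (m, n)" | "0 < pair2 a b (m, n)" | "(m, n) \<in> Kset a b"
    using less.prems assms by (force simp: Kset_def)
  then show ?case
  proof cases
    case 1
    define m' where "m' = m - pair1 a b (m, n)"
    have r: "refl1 a b (m, n) = (m', n)" by (simp add: refl1_def m'_def)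
    then have "qform a b (m', n) \<le> 0" using less.prems(3) by (metis qform_refl1)
    moreover from this have "0 < m'" using sign[of m' n] less.prems(2) by auto
    ultimately have "(m', n) \<in> pos_imag_roots a b"
      using less 1 by (auto simp: m'_def)
    then show ?thesis
      unfolding pos_imag_roots_def by (metis r refl1_refl1 worbit.r1)
  next
    case 2
    define n' where "n' = n - pair2 a b (m, n)"
    have r: "refl2 a b (m, n) = (m, n')" by (simp add: refl2_def n'_def)
    then have "qform a b (m, n') \<le> 0" using less.prems(3) by (metis qform_refl2)
    moreover from this have "0 < n'" using sign[of m n'] less.prems(1) by auto
    ultimately have "(m, n') \<in> pos_imag_roots a b"
      using less 2 by (auto simp: n'_def)
    then show ?thesis
      unfolding pos_imag_roots_def by (metis r refl2_refl2 worbit.r2)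
  next
    case 3
    then show ?thesis unfolding pos_imag_roots_def by (rule worbit.base)
  qed
qed

lemma qform_nonpos_root:
  assumes "1 \<le> a" "1 \<le> b" "qform a b x \<le> 0" "x \<noteq> (0, 0)"
  shows "x \<in> roots a b"
proof -
  obtain m n where x: "x = (m, n)" by fastforce
  from qform_nonpos_same_sign[OF assms(1,2)] assms(3,4) x
  consider "0 < m" "0 < n" | "0 < - m" "0 < - n" by fastforce
  then show ?thesis
  proof cases
    case 1
    then show ?thesis using qform_nonpos_pos_imag_root[OF assms(1,2)] assms(3) x
      by (simp add: roots_def imag_roots_def)
  next
    case 2
    then have "rneg x \<in> pos_imag_roots a b"
      using qform_nonpos_pos_imag_root[OF assms(1,2)] assms(3) x by (simp add: rneg_def qform_def)
    then show ?thesis by (metis roots_def imag_roots_def UnCI roots_rneg_iff)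
  qed
qed

fun sseq :: "int \<Rightarrow> int \<Rightarrow> nat \<Rightarrow> int" where
  "sseq a b 0 = 0"
| "sseq a b (Suc 0) = 1"
| "sseq a b (Suc (Suc k)) = (if even k then 1 else a * b) * sseq a b (Suc k) - sseq a b k"

lemma cd_sseq: "cd a b k = (if even k then (a * sseq a b k, b * sseq a b k) else (sseq a b k, sseq a b k))"
  by (induction a b k rule: cd.induct) (auto simp: algebra_simps)

lemma cseq_sseq: "cseq a b k = (if even k then a * sseq a b k else sseq a b k)"
  by (simp add: cseq_def cd_sseq)

lemma dseq_sseq: "dseq a b k = (if even k then b * sseq a b k else sseq a b k)"
  by (simp add: dseq_def cd_sseq)

lemma cseq_Suc_Suc: "cseq a b (Suc (Suc k)) = a * dseq a b (Suc k) - cseq a b k"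
  by (simp add: cseq_def dseq_def)

lemma dseq_Suc_Suc: "dseq a b (Suc (Suc k)) = b * cseq a b (Suc k) - dseq a b k"
  by (simp add: cseq_def dseq_def)

lemma sseq_growth:
  assumes "4 \<le> a * b"
  shows "0 \<le> sseq a b k \<and>
    (if even k then 2 * sseq a b k + 1 \<le> sseq a b (Suc k) else sseq a b k + 1 \<le> 2 * sseq a b (Suc k))"
proof (induction k)
  case (Suc k)
  show ?case
  proof (cases "even k")
    case True
    then show ?thesis using Suc by auto
  next
    case False
    have IH: "0 \<le> sseq a b k" "sseq a b k + 1 \<le> 2 * sseq a b (Suc k)" using Suc False by auto
    then have "4 * sseq a b (Suc k) \<le> a * b * sseq a b (Suc k)"
      using assms by (intro mult_right_mono) auto
    moreover have "sseq a b (Suc (Suc k)) = a * b * sseq a b (Suc k) - sseq a b k"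
      using False by simp
    ultimately have "2 * sseq a b (Suc k) + 1 \<le> sseq a b (Suc (Suc k))" using IH by linarith
    then show ?thesis using IH False by auto
  qed
qed simp

lemma sseq_nonneg: "4 \<le> a * b \<Longrightarrow> 0 \<le> sseq a b k"
  using sseq_growth by blast

lemma sseq_pos:
  assumes "4 \<le> a * b" "1 \<le> k"
  shows "1 \<le> sseq a b k"
proof -
  obtain i where "k = Suc i" using assms(2) by (cases k) auto
  then show ?thesis using sseq_growth[OF assms(1), of i] by (auto split: if_splits)
qed

lemma sseq_diff2_odd:
  assumes "4 \<le> a * b" "odd p"
  shows "(a * b - 4) * sseq a b (Suc p) + 2 \<le> sseq a b (Suc (Suc p)) - sseq a b p"
proof -
  have "sseq a b p + 1 \<le> 2 * sseq a b (Suc p)" using sseq_growth[OF assms(1), of p] assms(2) by simp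
  moreover have "sseq a b (Suc (Suc p)) = a * b * sseq a b (Suc p) - sseq a b p"
    using assms(2) by simp
  ultimately show ?thesis unfolding left_diff_distrib by linarith
qed

lemma sseq_diff2_pos:
  assumes "4 \<le> a * b"
  shows "1 \<le> sseq a b (Suc (Suc p)) - sseq a b p"
proof (cases "even p")
  case False
  have "0 \<le> (a * b - 4) * sseq a b (Suc p)" using assms sseq_nonneg[OF assms] by simp
  then show ?thesis using sseq_diff2_odd[OF assms False] by linarith
qed (use sseq_growth[OF assms, of p] in auto)

lemma sseq_diff2_even:
  assumes "5 \<le> a * b" "even p" "2 \<le> p"
  shows "2 \<le> sseq a b (Suc (Suc p)) - sseq a b p"
proof -
  obtain q where q: "p = Suc q" "odd q" using assms(2,3) by (cases p) auto
  have pos: "1 \<le> sseq a b p" using sseq_pos assms(1,3) by simp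
  then have "5 * sseq a b p \<le> a * b * sseq a b p"
    using assms(1) by (intro mult_right_mono) auto
  moreover have "sseq a b q + 1 \<le> 2 * sseq a b p"
    using sseq_growth[of a b q] assms(1) q by simp
  moreover have "sseq a b (Suc p) = a * b * sseq a b p - sseq a b q"
    using q by simp
  moreover have "sseq a b (Suc (Suc p)) = sseq a b (Suc p) - sseq a b p"
    using assms(2) by simp
  ultimately show ?thesis using pos by linarith
qed

lemma sseq_ge_2:
  assumes "4 \<le> a * b" "3 \<le> k"
  shows "2 \<le> sseq a b k"
  using assms(2)
proof (induction k rule: less_induct)
  case (less k)
  show ?case
  proof (cases "k \<le> 4")
    case True
    then have "k = 3 \<or> k = 4" using less.prems by auto
    then show ?thesis using assms(1) by (auto simp: eval_nat_numeral)
  next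
    case False
    define p where "p = k - 2"
    have "k = Suc (Suc p)" "3 \<le> p" using False by (auto simp: p_def)
    then show ?thesis using less.IH[of p] sseq_diff2_pos[OF assms(1), of p] by simp
  qed
qed

lemma cseq_pos: "4 \<le> a * b \<Longrightarrow> 1 \<le> a \<Longrightarrow> 1 \<le> k \<Longrightarrow> 1 \<le> cseq a b k"
  using sseq_pos[of a b k] mult_mono[of 1 a 1 "sseq a b k"] by (simp add: cseq_sseq)

lemma dseq_pos: "4 \<le> a * b \<Longrightarrow> 1 \<le> b \<Longrightarrow> 1 \<le> k \<Longrightarrow> 1 \<le> dseq a b k"
  using sseq_pos[of a b k] mult_mono[of 1 b 1 "sseq a b k"] by (simp add: dseq_sseq)

lemma beta1_0 [simp]: "beta1 a b 0 = (0, 1)"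
  by (simp add: beta1_def cseq_def dseq_def)

lemma beta2_0 [simp]: "beta2 a b 0 = (1, 0)"
  by (simp add: beta2_def cseq_def dseq_def)

lemma refl1_beta1: "refl1 a b (beta1 a b j) = beta2 a b (Suc j)"
  by (simp add: refl1_def beta1_def beta2_def pair1_def cseq_Suc_Suc)

lemma refl2_beta2: "refl2 a b (beta2 a b k) = beta1 a b (Suc k)"
  by (simp add: refl2_def beta1_def beta2_def pair2_def dseq_Suc_Suc)

lemma refl1_beta2_Suc: "refl1 a b (beta2 a b (Suc k)) = beta1 a b k"
  by (metis refl1_beta1 refl1_refl1)

lemma refl2_beta1_Suc: "refl2 a b (beta1 a b (Suc j)) = beta2 a b j"
  by (metis refl2_beta2 refl2_refl2)

lemma refl1_alpha1: "refl1 a b (1, 0) = rneg (1, 0)"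
  by (simp add: refl1_def pair1_def rneg_def)

lemma refl2_alpha2: "refl2 a b (0, 1) = rneg (0, 1)"
  by (simp add: refl2_def pair2_def rneg_def)

lemma qform_beta:
  "qform a b (beta1 a b n) = (if even n then a else b) \<and>
   qform a b (beta2 a b n) = (if even n then b else a)"
proof (induction n)
  case (Suc n)
  then show ?case by (metis refl1_beta1 refl2_beta2 qform_refl1 qform_refl2 even_Suc)
qed (simp add: qform_def)

lemma beta_real_roots: "beta1 a b j \<in> real_roots a b \<and> beta2 a b j \<in> real_roots a b"
proof (induction j)
  case (Suc j)
  then show ?case unfolding real_roots_def by (metis refl1_beta1 refl2_beta2 worbit.r1 worbit.r2)
qed (simp add: real_roots_def worbit.base)

lemma real_roots_betas:
  assumes "x \<in> real_roots a b"
  shows "\<exists>j. x = beta1 a b j \<or> x = beta2 a b j \<or> rneg x = beta1 a b j \<or> rneg x = beta2 a b j"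
  using assms unfolding real_roots_def
proof (induction rule: worbit.induct)
  case (base x)
  then show ?case by (metis beta1_0 beta2_0 insertE empty_iff)
next
  case (r1 x)
  then obtain j where "x = beta1 a b j \<or> x = beta2 a b j \<or> rneg x = beta1 a b j \<or> rneg x = beta2 a b j"
    by blast
  then show ?case
    by (cases j) (metis refl1_beta1 refl1_beta2_Suc refl1_alpha1 beta2_0 refl1_rneg rneg_rneg)+
next
  case (r2 x)
  then obtain j where "x = beta1 a b j \<or> x = beta2 a b j \<or> rneg x = beta1 a b j \<or> rneg x = beta2 a b j"
    by blast
  then show ?case
    by (cases j) (metis refl2_beta2 refl2_beta1_Suc refl2_alpha2 beta1_0 refl2_rneg rneg_rneg)+
qed

lemma pos_real_roots_betas:
  assumes "4 \<le> a * b" "1 \<le> a" "1 \<le> b" "x \<in> pos_real_roots a b"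
  shows "\<exists>j. x = beta1 a b j \<or> x = beta2 a b j"
proof -
  have x: "x \<in> real_roots a b" "0 \<le> fst x" "0 \<le> snd x"
    using assms(4) by (auto simp: pos_real_roots_def)
  have pos: "0 < snd (beta1 a b j)" "0 < fst (beta2 a b j)" for j
    using dseq_pos[OF assms(1,3), of "Suc j"] cseq_pos[OF assms(1,2), of "Suc j"]
    by (simp_all add: beta1_def beta2_def)
  have neg: "fst (rneg x) \<le> 0" "snd (rneg x) \<le> 0"
    using x(2,3) by (simp_all add: rneg_def)
  have "rneg x \<noteq> beta1 a b j" "rneg x \<noteq> beta2 a b j" for j
    using pos[of j] neg by auto
  then show ?thesis using real_roots_betas[OF x(1)] by blast
qed

text \<open>The reflections move the index pair (j, k) to (k - 1, j + 1) and (k + 1, j - 1), which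
  preserve exactly j + k and the parity of k.\<close>
lemma beta_pair_reduction:
  fixes \<Phi> :: "rlat \<Rightarrow> rlat \<Rightarrow> 'c"
  assumes \<Phi>1: "\<And>x y. \<Phi> (refl1 a b x) (refl1 a b y) = \<Phi> y x"
    and \<Phi>2: "\<And>x y. \<Phi> (refl2 a b x) (refl2 a b y) = \<Phi> y x"
  shows "\<Phi> (beta1 a b j) (beta2 a b k) =
    (if even k then \<Phi> (beta1 a b (j + k)) (1, 0) else \<Phi> (0, 1) (beta2 a b (j + k)))"
proof -
  have step1: "\<Phi> (beta1 a b j) (beta2 a b (Suc k)) = \<Phi> (beta1 a b k) (beta2 a b (Suc j))" for j k
    using \<Phi>1[of "beta2 a b (Suc j)" "beta1 a b k"] by (simp add: refl1_beta1 refl1_beta2_Suc)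
  have step2: "\<Phi> (beta1 a b (Suc j)) (beta2 a b k) = \<Phi> (beta1 a b (Suc k)) (beta2 a b j)" for j k
    using \<Phi>2[of "beta2 a b j" "beta1 a b (Suc k)"] by (simp add: refl2_beta2 refl2_beta1_Suc)
  show ?thesis
  proof (induction k arbitrary: j rule: nat_induct2)
    case 1
    show ?case using step1[of j 0] by simp
  next
    case (step k)
    have "\<Phi> (beta1 a b j) (beta2 a b (k + 2)) = \<Phi> (beta1 a b (j + 2)) (beta2 a b k)"
      using step1[of j "Suc k"] step2[of k "Suc j"] by (simp add: numeral_2_eq_2)
    then show ?case using step[of "j + 2"] by (simp add: algebra_simps)
  qed simp
qed

locale rank2_cartan =
  fixes a b :: int
  assumes b_pos: "1 \<le> b" and b_le_a: "b \<le> a" and b_ge_2_or_a_ge_5: "2 \<le> b \<or> 5 \<le> a"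
begin

lemma a_pos: "1 \<le> a"
  using b_pos b_le_a by simp

lemma ab_ge_4: "4 \<le> a * b"
proof (cases "2 \<le> b")
  case True
  then show ?thesis using b_le_a mult_mono[of 2 a 2 b] by simp
next
  case False
  then have "b = 1" using b_pos by simp
  then show ?thesis using b_ge_2_or_a_ge_5 by simp
qed

lemma qform_beta1_minus_alpha1:
  assumes "2 \<le> b \<or> N \<noteq> 1"
  shows "a < qform a b (rdiff (beta1 a b N) (1, 0))"
proof -
  define D where "D = sseq a b (Suc (Suc N)) - sseq a b N"
  have pair: "pair1 a b (beta1 a b N) = cseq a b N - cseq a b (Suc (Suc N))"
    by (simp add: pair1_def beta1_def cseq_Suc_Suc)
  have q: "qform a b (rdiff (beta1 a b N) (1, 0)) =
      qform a b (beta1 a b N) + b + b * (cseq a b (Suc (Suc N)) - cseq a b N)"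
    by (simp only: qform_rdiff_alpha1 pair) (simp add: algebra_simps)
  show ?thesis
  proof (cases "even N")
    case True
    have "1 \<le> D" using sseq_diff2_pos[OF ab_ge_4] by (simp add: D_def)
    then have "0 \<le> b * (a * D)" using a_pos b_pos by simp
    then show ?thesis using q True qform_beta[of a b N] b_pos by (simp add: cseq_sseq D_def algebra_simps)
  next
    case False
    have D: "(a * b - 4) * sseq a b (Suc N) + 2 \<le> D"
      using sseq_diff2_odd[OF ab_ge_4 False] by (simp add: D_def)
    have "a < 2 * b + b * D"
    proof (cases "2 \<le> b")
      case True
      have "a * b - 4 \<le> (a * b - 4) * sseq a b (Suc N)"
        using mult_left_mono[OF sseq_pos[OF ab_ge_4, of "Suc N"], of "a * b - 4"] ab_ge_4 by simp
      then have "a * b \<le> 2 + D" using D by linarith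
      then have "b * (a * b) \<le> b * (2 + D)" using b_pos by (intro mult_left_mono) auto
      then have "a * b * b \<le> 2 * b + b * D" by (simp add: algebra_simps)
      moreover have "a * (2 * 2) \<le> a * (b * b)" using True a_pos by (intro mult_left_mono mult_mono) auto
      then have "4 * a \<le> a * b * b" by (simp add: algebra_simps)
      ultimately show ?thesis using a_pos by linarith
    next
      case False
      then have b1: "b = 1" "5 \<le> a" using b_pos b_ge_2_or_a_ge_5 by auto
      then have "3 \<le> Suc N" using assms \<open>odd N\<close> by (cases N) auto
      then have "(a - 4) * 2 \<le> (a - 4) * sseq a b (Suc N)"
        using sseq_ge_2[OF ab_ge_4] b1 by (intro mult_left_mono) auto
      then show ?thesis using D b1 by simp
    qed
    then show ?thesis using q False qform_beta[of a b N] by (simp add: cseq_sseq D_def algebra_simps)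
  qed
qed

lemma qform_alpha2_minus_beta2: "a < qform a b (rdiff (0, 1) (beta2 a b N))"
proof -
  have pair: "pair2 a b (beta2 a b N) = dseq a b N - dseq a b (Suc (Suc N))"
    by (simp add: pair2_def beta2_def dseq_Suc_Suc)
  have q: "qform a b (rdiff (beta2 a b N) (0, 1)) =
      qform a b (beta2 a b N) + a + a * (dseq a b (Suc (Suc N)) - dseq a b N)"
    by (simp only: qform_rdiff_alpha2 pair) (simp add: algebra_simps)
  have "dseq a b (Suc (Suc N)) - dseq a b N =
      (if even N then b else 1) * (sseq a b (Suc (Suc N)) - sseq a b N)"
    by (simp add: dseq_sseq right_diff_distrib del: sseq.simps)
  moreover have "1 \<le> sseq a b (Suc (Suc N)) - sseq a b N" using sseq_diff2_pos[OF ab_ge_4] .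
  ultimately have "0 \<le> a * (dseq a b (Suc (Suc N)) - dseq a b N)" using a_pos b_pos by simp
  moreover have "1 \<le> qform a b (beta2 a b N)" using qform_beta[of a b N] a_pos b_pos by auto
  ultimately show ?thesis using q qform_rdiff_commute[of a b "(0, 1)" "beta2 a b N"] by linarith
qed

lemma a_plus_b_le_sseq_diff2:
  assumes "even p" "2 \<le> b \<or> p \<noteq> 0"
  shows "a + b \<le> a * b * (sseq a b (Suc (Suc p)) - sseq a b p)"
proof (cases "2 \<le> b")
  case True
  have "1 \<le> sseq a b (Suc (Suc p)) - sseq a b p" using sseq_diff2_pos[OF ab_ge_4] .
  then have "a * b * 1 \<le> a * b * (sseq a b (Suc (Suc p)) - sseq a b p)"
    using ab_ge_4 by (intro mult_left_mono) auto
  moreover have "1 * 1 \<le> (a - 1) * (b - 1)" using True b_le_a by (intro mult_mono) auto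
  ultimately show ?thesis by (simp add: algebra_simps)
next
  case False
  define D where "D = sseq a b (Suc (Suc p)) - sseq a b p"
  have b1: "b = 1" "5 \<le> a" and "2 \<le> p" using False b_pos b_ge_2_or_a_ge_5 assms by auto
  then have "2 \<le> D" using sseq_diff2_even assms(1) by (simp add: D_def)
  then have "a * 2 \<le> a * D" using a_pos by (intro mult_left_mono) auto
  moreover have "a + b \<le> a * 2" "a * b * D = a * D" using b1 by simp_all
  ultimately show ?thesis unfolding D_def[symmetric] by linarith
qed

lemma qform_beta1_Suc_minus_alpha2:
  assumes "2 \<le> b \<or> p \<noteq> 0"
  shows "qform a b (rdiff (beta1 a b (Suc p)) (0, 1)) \<le> 0"
proof -
  have "pair2 a b (beta1 a b (Suc p)) = dseq a b (Suc (Suc p)) - dseq a b p"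
    by (simp add: pair2_def beta1_def dseq_Suc_Suc)
  then have q: "qform a b (rdiff (beta1 a b (Suc p)) (0, 1)) =
      qform a b (beta1 a b (Suc p)) + a - a * (dseq a b (Suc (Suc p)) - dseq a b p)"
    by (simp add: qform_rdiff_alpha2)
  show ?thesis
  proof (cases "even p")
    case True
    then show ?thesis
      using q a_plus_b_le_sseq_diff2[OF True assms] qform_beta[of a b "Suc p"]
      by (simp add: dseq_sseq algebra_simps)
  next
    case False
    have "0 \<le> (a * b - 4) * sseq a b (Suc p)" using ab_ge_4 sseq_nonneg[OF ab_ge_4] by simp
    then have "a * 2 \<le> a * (sseq a b (Suc (Suc p)) - sseq a b p)"
      using sseq_diff2_odd[OF ab_ge_4 False] a_pos by (intro mult_left_mono) auto
    then show ?thesis using q False qform_beta[of a b "Suc p"] by (simp add: dseq_sseq)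
  qed
qed

lemma qform_beta2_Suc_minus_alpha1:
  assumes "2 \<le> b \<or> p \<noteq> 0"
  shows "qform a b (rdiff (beta2 a b (Suc p)) (1, 0)) \<le> 0"
proof -
  have "pair1 a b (beta2 a b (Suc p)) = cseq a b (Suc (Suc p)) - cseq a b p"
    by (simp add: pair1_def beta2_def cseq_Suc_Suc)
  then have q: "qform a b (rdiff (beta2 a b (Suc p)) (1, 0)) =
      qform a b (beta2 a b (Suc p)) + b - b * (cseq a b (Suc (Suc p)) - cseq a b p)"
    by (simp add: qform_rdiff_alpha1)
  show ?thesis
  proof (cases "even p")
    case True
    then show ?thesis
      using q a_plus_b_le_sseq_diff2[OF True assms] qform_beta[of a b "Suc p"]
      by (simp add: cseq_sseq algebra_simps)
  next
    case False
    have "0 \<le> (a * b - 4) * sseq a b (Suc p)" using ab_ge_4 sseq_nonneg[OF ab_ge_4] by simp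
    then have "b * 2 \<le> b * (sseq a b (Suc (Suc p)) - sseq a b p)"
      using sseq_diff2_odd[OF ab_ge_4 False] b_pos by (intro mult_left_mono) auto
    then show ?thesis using q False qform_beta[of a b "Suc p"] by (simp add: cseq_sseq)
  qed
qed


lemma beta_Suc_minus_simple_root_in_roots:
  "rdiff (beta1 a b (Suc p)) (0, 1) \<in> roots a b \<and> rdiff (beta2 a b (Suc p)) (1, 0) \<in> roots a b"
proof (cases "b = 1 \<and> p = 0")
  case True
  then have "rdiff (beta1 a b (Suc p)) (0, 1) = beta2 a b 0"
    and "rdiff (beta2 a b (Suc p)) (1, 0) = beta2 a b 2"
    by (simp_all add: beta1_def beta2_def rdiff_def cseq_def dseq_def eval_nat_numeral)
  then show ?thesis using beta_real_roots[of a b 2] by (simp add: roots_def real_roots_def worbit.base)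
next
  case False
  then have "2 \<le> b \<or> p \<noteq> 0" using b_pos by auto
  moreover have "rdiff (beta1 a b (Suc p)) (0, 1) \<noteq> (0, 0)" "rdiff (beta2 a b (Suc p)) (1, 0) \<noteq> (0, 0)"
    using cseq_pos[OF ab_ge_4 a_pos, of "Suc p"] dseq_pos[OF ab_ge_4 b_pos, of "Suc p"]
    by (auto simp: rdiff_def beta1_def beta2_def)
  ultimately show ?thesis
    using qform_nonpos_root[OF a_pos b_pos] qform_beta1_Suc_minus_alpha2 qform_beta2_Suc_minus_alpha1
    by blast
qed

lemma beta_chain_shift_diff_in_roots:
  "rdiff (beta1 a b (m + Suc p)) (beta1 a b m) \<in> roots a b \<and>
   rdiff (beta2 a b (m + Suc p)) (beta2 a b m) \<in> roots a b"
proof (induction m)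
  case 0
  then show ?case using beta_Suc_minus_simple_root_in_roots by simp
next
  case (Suc m)
  have "rdiff (beta1 a b (Suc m + Suc p)) (beta1 a b (Suc m)) =
      refl2 a b (rdiff (beta2 a b (m + Suc p)) (beta2 a b m))"
    and "rdiff (beta2 a b (Suc m + Suc p)) (beta2 a b (Suc m)) =
      refl1 a b (rdiff (beta1 a b (m + Suc p)) (beta1 a b m))"
    by (simp_all add: refl1_rdiff refl2_rdiff refl1_beta1 refl2_beta2)
  then show ?case using Suc by (simp add: roots_refl1_iff roots_refl2_iff)
qed

lemma beta_chain_diff_in_roots:
  assumes "i \<noteq> j"
  shows "rdiff (beta1 a b i) (beta1 a b j) \<in> roots a b"
    and "rdiff (beta2 a b i) (beta2 a b j) \<in> roots a b"
proof -
  have "rdiff (beta1 a b i) (beta1 a b j) \<in> roots a b \<and> rdiff (beta2 a b i) (beta2 a b j) \<in> roots a b"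
    if "j < i" for i j
    using beta_chain_shift_diff_in_roots[of j "i - j - 1"] that by simp
  then show "rdiff (beta1 a b i) (beta1 a b j) \<in> roots a b"
    and "rdiff (beta2 a b i) (beta2 a b j) \<in> roots a b"
    using assms roots_rneg_iff rneg_rdiff by (metis linorder_neq_iff)+
qed

lemma qform_beta1_minus_beta2:
  assumes "2 \<le> b \<or> (j, k) \<noteq> (1, 0)"
  shows "a < qform a b (rdiff (beta1 a b j) (beta2 a b k))"
proof -
  have "qform a b (rdiff (beta1 a b j) (beta2 a b k)) =
    (if even k then qform a b (rdiff (beta1 a b (j + k)) (1, 0))
     else qform a b (rdiff (0, 1) (beta2 a b (j + k))))"
    by (rule beta_pair_reduction)
      (metis qform_refl1 refl1_rdiff qform_rdiff_commute, metis qform_refl2 refl2_rdiff qform_rdiff_commute)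
  moreover have "2 \<le> b \<or> j + k \<noteq> 1" if "even k" using assms that by (cases k) auto
  ultimately show ?thesis using qform_beta1_minus_alpha1 qform_alpha2_minus_beta2 by simp
qed

lemma det2_beta1_beta2_nonzero: "det2 (beta1 a b j) (beta2 a b k) \<noteq> 0"
proof -
  have "det2 (beta1 a b j) (beta2 a b k) =
    (if even k then det2 (beta1 a b (j + k)) (1, 0) else det2 (0, 1) (beta2 a b (j + k)))"
    by (rule beta_pair_reduction) (simp_all add: det2_refl1 det2_refl2)
  then show ?thesis
    using cseq_pos[OF ab_ge_4 a_pos, of "Suc (j + k)"] dseq_pos[OF ab_ge_4 b_pos, of "Suc (j + k)"]
    by (simp add: det2_def beta1_def beta2_def)
qed

lemma pi_system_beta_pair:
  assumes "2 \<le> b \<or> (j, k) \<noteq> (1, 0)"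
  shows "pi_system a b {beta1 a b j, beta2 a b k}"
proof -
  have "rdiff x y \<notin> roots a b" if "x = beta1 a b j \<and> y = beta2 a b k \<or> x = beta2 a b k \<and> y = beta1 a b j" for x y
    using that qform_beta1_minus_beta2[OF assms] qform_gt_notin_roots[of b a] b_pos b_le_a
      qform_rdiff_commute by (metis order.trans zero_le_one)
  moreover have "rdiff x x \<notin> roots a b" for x
    using zero_notin_roots by (simp add: rdiff_def)
  ultimately show ?thesis using beta_real_roots unfolding pi_system_def by auto
qed

lemma pi_system_subset_beta_pair:
  assumes "\<Sigma> \<subseteq> pos_real_roots a b" "pi_system a b \<Sigma>"
  obtains j k where "\<Sigma> \<subseteq> {beta1 a b j, beta2 a b k}"
proof -
  have diff: "rdiff x y \<notin> roots a b" if "x \<in> \<Sigma>" "y \<in> \<Sigma>" for x y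
    using assms(2) that unfolding pi_system_def by blast
  obtain j where j: "\<And>i. beta1 a b i \<in> \<Sigma> \<Longrightarrow> i = j"
    using diff beta_chain_diff_in_roots(1) by metis
  obtain k where k: "\<And>i. beta2 a b i \<in> \<Sigma> \<Longrightarrow> i = k"
    using diff beta_chain_diff_in_roots(2) by metis
  have "x = beta1 a b j \<or> x = beta2 a b k" if "x \<in> \<Sigma>" for x
    using pos_real_roots_betas[OF ab_ge_4 a_pos b_pos] assms(1) that j k by blast
  then show ?thesis using that by blast
qed

lemma not_pi_system_beta1_1_beta2_0:
  assumes "b = 1"
  shows "\<not> pi_system a b {beta1 a b 1, beta2 a b 0}"
proof -
  have "rdiff (beta1 a b 1) (beta2 a b 0) = (0, 1)"
    using assms by (simp add: beta1_def rdiff_def cseq_def dseq_def)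
  moreover have "(0, 1) \<in> roots a b" by (simp add: roots_def real_roots_def worbit.base)
  ultimately show ?thesis unfolding pi_system_def by auto
qed

end

theorem theorem3p1:
  fixes a b :: int
  assumes "b \<ge> 1" and "a \<ge> b" and "b \<ge> 2 \<or> (b = 1 \<and> a \<ge> 5)"
  shows "(\<forall>\<Sigma>. \<Sigma> \<subseteq> pos_real_roots a b \<and> pi_system a b \<Sigma> \<longrightarrow>
            finite \<Sigma> \<and> card \<Sigma> \<le> 2 \<and>
            (card \<Sigma> = 2 \<longrightarrow> (\<exists>j k. \<Sigma> = {beta1 a b j, beta2 a b k}) \<and> lin_indep \<Sigma>))
       \<and> (b \<ge> 2 \<longrightarrow> (\<forall>j k. pi_system a b {beta1 a b j, beta2 a b k}))
       \<and> (b = 1 \<and> a \<ge> 5 \<longrightarrow>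
            (\<forall>j k. pi_system a b {beta1 a b j, beta2 a b k} \<longleftrightarrow> (j, k) \<noteq> (1, 0)))"
proof -
  interpret rank2_cartan a b
    using assms by unfold_locales auto
  have "finite \<Sigma> \<and> card \<Sigma> \<le> 2 \<and>
      (card \<Sigma> = 2 \<longrightarrow> (\<exists>j k. \<Sigma> = {beta1 a b j, beta2 a b k}) \<and> lin_indep \<Sigma>)"
    if \<Sigma>: "\<Sigma> \<subseteq> pos_real_roots a b" "pi_system a b \<Sigma>" for \<Sigma>
  proof -
    obtain j k where sub: "\<Sigma> \<subseteq> {beta1 a b j, beta2 a b k}"
      using pi_system_subset_beta_pair[OF \<Sigma>] .
    have card: "card {beta1 a b j, beta2 a b k} \<le> 2" by (simp add: card_insert_le_m1)
    have "\<Sigma> = {beta1 a b j, beta2 a b k}" if "card \<Sigma> = 2"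
      using card_seteq[OF _ sub] card that by simp
    then show ?thesis
      using finite_subset[OF sub] card_mono[OF _ sub] card lin_indep_pair det2_beta1_beta2_nonzero
      by fastforce
  qed
  then show ?thesis using pi_system_beta_pair not_pi_system_beta1_1_beta2_0 by blast
qed

end
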